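(* Let the target locations $S^*_1,\dots,S^*_M$ be pairwise distinct, let $(S_n)_{n\ge1}$ satisfy infill asymptotics with respect to them, and let $k_N$ be the adaptive number-of-neighbors sequence for some positive $(a_t)$ with $a_t\to0$. Then there exists $N_0$ such that for all $N\ge N_0$, all $m\ne m'$ and all $1\le n\le N$, $\Psi^{N,k_N}_{mn}\Psi^{N,k_N}_{m'n}=0$.
   Context: $(\mathcal S,d)$ metric space. Infill asymptotics: for every $m$ and open $U\ni S^*_m$, infinitely many $n$ satisfy $S_n\in U$. $\Psi^{N,k}\in\mathbb R^{M\times N}$: $\Psi^{N,k}_{mn}=1/k$ if $S_n$ is among the $k$ points of $\{S_1,\dots,S_N\}$ closest to $S^*_m$, else $0$ (ties broken uniformly at random). Adaptive sequence: $R_{N,t}=\max_m\max\{d(S^*_m,S_n):n\le N,\ S_n \text{ among the } t \text{ nearest neighbors of } S^*_m\text{ in }\{S_1,\dots,S_N\}\}$; $k_1=1$ and $k_{N+1}=k_N+1$ if $R_{N+1,k_N+1}\le a_{k_N}$, else $k_{N+1}=k_N$. *)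

theory Defs
  imports "HOL-Analysis.Analysis"
begin

definition is_knn :: "(nat \<Rightarrow> 'a::metric_space) \<Rightarrow> nat \<Rightarrow> nat \<Rightarrow> 'a \<Rightarrow> nat set \<Rightarrow> bool" where
  "is_knn S N t x A \<longleftrightarrow> A \<subseteq> {1..N} \<and> card A = min t N \<and>
     (\<forall>n\<in>A. \<forall>n'\<in>{1..N} - A. dist x (S n) \<le> dist x (S n'))"

definition infill :: "(nat \<Rightarrow> 'a::metric_space) \<Rightarrow> (nat \<Rightarrow> 'a) \<Rightarrow> nat \<Rightarrow> bool" where
  "infill S Sstar M \<longleftrightarrow> (\<forall>m\<in>{1..M}. \<forall>U. open U \<and> Sstar m \<in> U \<longrightarrow> infinite {n. n \<ge> 1 \<and> S n \<in> U})"

text \<open>R_{N,t}: maximal distance from a target to a point among its t nearest neighbours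
  (independent of tie-breaking).\<close>
definition Rdist :: "(nat \<Rightarrow> 'a::metric_space) \<Rightarrow> (nat \<Rightarrow> 'a) \<Rightarrow> nat \<Rightarrow> nat \<Rightarrow> nat \<Rightarrow> real" where
  "Rdist S Sstar M N t = Max ((\<lambda>m. Sup {dist (Sstar m) (S n) | n A. n \<le> N \<and> is_knn S N t (Sstar m) A \<and> n \<in> A}) ` {1..M})"

definition adaptive_k :: "(nat \<Rightarrow> 'a::metric_space) \<Rightarrow> (nat \<Rightarrow> 'a) \<Rightarrow> nat \<Rightarrow> (nat \<Rightarrow> real) \<Rightarrow> (nat \<Rightarrow> nat) \<Rightarrow> bool" where
  "adaptive_k S Sstar M a k \<longleftrightarrow> k 1 = 1 \<and>
     (\<forall>N\<ge>1. k (N + 1) = (if Rdist S Sstar M (N + 1) (k N + 1) \<le> a (k N) then k N + 1 else k N))"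

text \<open>Entry (m,n) of Psi^{N,k}, given the (tie-broken) neighbour set A of target m.\<close>
definition Psi_entry :: "nat \<Rightarrow> nat set \<Rightarrow> nat \<Rightarrow> real" where
  "Psi_entry k A n = (if n \<in> A then 1 / real k else 0)"

end

theory Submission
  imports Defs
begin

text \<open>The adaptive rule raises \<open>k\<^sub>N\<close> only when the \<open>k\<^sub>N + 1\<close> nearest neighbours of every
  target lie within distance \<open>a\<^sub>k\<^sub>N\<close>. By induction, once \<open>k\<^sub>N \<ge> 2\<close> every target has at least
  \<open>k\<^sub>N\<close> sample points within \<open>a\<^sub>k\<^sub>N\<^sub>-\<^sub>1\<close>, so all its \<open>k\<^sub>N\<close> nearest neighbours lie in that ball.
  Infill asymptotics forces \<open>k\<^sub>N \<rightarrow> \<infinity>\<close>: were \<open>k\<close> frozen at \<open>K\<close>, eventually \<open>K + 1\<close> points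
  would fall within \<open>a\<^sub>K / 2\<close> of every target and trigger an increment. Hence the radius
  \<open>a\<^sub>k\<^sub>N\<^sub>-\<^sub>1\<close> eventually drops below half the minimal separation of the targets, and no sample
  point can be a neighbour of two of them.\<close>

lemma ex_subset_smallest_values:
  fixes f :: "'b \<Rightarrow> 'c::linorder"
  assumes "finite I" "t \<le> card I"
  shows "\<exists>A\<subseteq>I. card A = t \<and> (\<forall>x\<in>A. \<forall>y\<in>I - A. f x \<le> f y)"
  using assms(2)
proof (induction t)
  case 0
  then show ?case by auto
next
  case (Suc t)
  then obtain A where A: "A \<subseteq> I" "card A = t" "\<forall>x\<in>A. \<forall>y\<in>I - A. f x \<le> f y"
    by auto
  have "finite (I - A)" "I - A \<noteq> {}"
    using A Suc.prems assms(1) by (auto dest: card_mono)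
  then obtain b where b: "b \<in> I - A" "\<forall>y\<in>I - A. f b \<le> f y"
    by (metis arg_min_if_finite(1) arg_min_least)
  have "finite A"
    using A(1) assms(1) finite_subset by blast
  then show ?case
    using A b by (intro exI[of _ "insert b A"]) auto
qed

lemma finite_inj_on_separated:
  fixes f :: "'b \<Rightarrow> 'a::metric_space"
  assumes "finite I" "inj_on f I"
  shows "\<exists>\<delta>>0. \<forall>x\<in>I. \<forall>y\<in>I. x \<noteq> y \<longrightarrow> \<delta> \<le> dist (f x) (f y)"
proof -
  define D where "D = (\<lambda>(x, y). dist (f x) (f y)) ` (Sigma I (\<lambda>x. I - {x}))"
  have "finite D"
    unfolding D_def using assms(1) by auto
  moreover have "\<forall>d\<in>D. 0 < d"
    unfolding D_def using assms(2) by (auto dest: inj_onD)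
  ultimately have "0 < Min (insert 1 D)"
    by simp
  moreover have "Min (insert 1 D) \<le> dist (f x) (f y)" if "x \<in> I" "y \<in> I" "x \<noteq> y" for x y
    using \<open>finite D\<close> that unfolding D_def by (auto intro!: Min_le rev_image_eqI[of "(x, y)"])
  ultimately show ?thesis
    by blast
qed

lemma infinite_imp_eventually_card_ge:
  fixes X :: "nat set"
  assumes "infinite X"
  shows "eventually (\<lambda>N. j \<le> card (X \<inter> {..N})) sequentially"
proof -
  obtain F where F: "F \<subseteq> X" "finite F" "card F = j"
    using infinite_arbitrarily_large[OF assms] by blast
  have "j \<le> card (X \<inter> {..N})" if "Max F \<le> N" for N
  proof -
    have "F \<subseteq> X \<inter> {..N}"
      using F(1) that Max_ge[OF F(2)] by (auto intro: order_trans)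
    then show ?thesis
      using F(3) by (auto intro: card_mono)
  qed
  then show ?thesis
    unfolding eventually_sequentially by blast
qed

definition count_within :: "(nat \<Rightarrow> 'a::metric_space) \<Rightarrow> nat \<Rightarrow> 'a \<Rightarrow> real \<Rightarrow> nat" where
  "count_within S N x r = card {n\<in>{1..N}. dist x (S n) \<le> r}"

lemma count_within_le: "count_within S N x r \<le> N"
proof -
  have "count_within S N x r \<le> card {1..N}"
    unfolding count_within_def by (intro card_mono) auto
  then show ?thesis
    by simp
qed

lemma count_within_mono:
  assumes "N \<le> N'" "r \<le> r'"
  shows "count_within S N x r \<le> count_within S N' x r'"
  unfolding count_within_def using assms by (intro card_mono) auto

lemma is_knn_exists: "\<exists>A. is_knn S N t x A"
  using ex_subset_smallest_values[of "{1..N}" "min t N" "\<lambda>n. dist x (S n)"]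
  unfolding is_knn_def by auto

lemma is_knn_dist_le:
  assumes "is_knn S N t x A" "t \<le> count_within S N x r" "n \<in> A"
  shows "dist x (S n) \<le> r"
proof (rule ccontr)
  \<comment> \<open>otherwise all \<open>t\<close> points within \<open>r\<close> are selected together with \<open>n\<close>\<close>
  assume far: "\<not> dist x (S n) \<le> r"
  let ?B = "{n\<in>{1..N}. dist x (S n) \<le> r}"
  have "t \<le> N"
    using assms(2) count_within_le order_trans by blast
  then have A: "A \<subseteq> {1..N}" "card A = t" "\<forall>n\<in>A. \<forall>n'\<in>{1..N} - A. dist x (S n) \<le> dist x (S n')"
    using assms(1) unfolding is_knn_def by auto
  have "b \<in> A" if b: "b \<in> ?B" for b
  proof (rule ccontr)
    assume "b \<notin> A"
    then have "dist x (S n) \<le> dist x (S b)"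
      using A(3) assms(3) b by blast
    then show False
      using b far by simp
  qed
  then have "insert n ?B \<subseteq> A"
    using assms(3) by blast
  then have "card (insert n ?B) \<le> t"
    using A(2) card_mono[OF finite_subset[OF A(1)]] by fastforce
  moreover have "n \<notin> ?B"
    using far by blast
  ultimately show False
    using assms(2) unfolding count_within_def by simp
qed

lemma dist_le_Rdist:
  assumes "m \<in> {1..M}" "is_knn S N t (Sstar m) A" "n \<in> A"
  shows "dist (Sstar m) (S n) \<le> Rdist S Sstar M N t"
proof -
  let ?X = "{dist (Sstar m) (S n) | n A. n \<le> N \<and> is_knn S N t (Sstar m) A \<and> n \<in> A}"
  have "n \<le> N"
    using assms(2,3) unfolding is_knn_def by auto
  moreover have "finite ?X"
    by (rule finite_subset[of _ "(\<lambda>n. dist (Sstar m) (S n)) ` {..N}"]) auto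
  ultimately have "dist (Sstar m) (S n) \<le> Sup ?X"
    using assms(2,3) by (intro cSup_upper bdd_above_finite) auto
  also have "\<dots> \<le> Rdist S Sstar M N t"
    unfolding Rdist_def using assms(1) by (intro Max_ge) auto
  finally show ?thesis .
qed

lemma count_within_Rdist:
  assumes "m \<in> {1..M}" "t \<le> N"
  shows "t \<le> count_within S N (Sstar m) (Rdist S Sstar M N t)"
proof -
  obtain A where A: "is_knn S N t (Sstar m) A"
    using is_knn_exists by blast
  then have "A \<subseteq> {1..N}" "card A = t"
    using assms(2) unfolding is_knn_def by auto
  moreover have "dist (Sstar m) (S n) \<le> Rdist S Sstar M N t" if "n \<in> A" for n
    using dist_le_Rdist[of m M S N t Sstar A n] assms(1) A that by simp
  ultimately have "card A \<le> card {n\<in>{1..N}. dist (Sstar m) (S n) \<le> Rdist S Sstar M N t}"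
    by (intro card_mono) auto
  then show ?thesis
    unfolding count_within_def using \<open>card A = t\<close> by simp
qed

lemma Rdist_le:
  assumes "1 \<le> M" "1 \<le> t" "\<forall>m\<in>{1..M}. t \<le> count_within S N (Sstar m) r"
  shows "Rdist S Sstar M N t \<le> r"
proof -
  have "Sup {dist (Sstar m) (S n) | n A. n \<le> N \<and> is_knn S N t (Sstar m) A \<and> n \<in> A} \<le> r"
    (is "Sup ?X \<le> r") if m: "m \<in> {1..M}" for m
  proof (rule cSup_least)
    have "t \<le> N"
      using assms(3) m count_within_le order_trans by blast
    obtain A where A: "is_knn S N t (Sstar m) A"
      using is_knn_exists by blast
    then have "A \<noteq> {}" "A \<subseteq> {1..N}"
      using assms(2) \<open>t \<le> N\<close> unfolding is_knn_def by auto
    then obtain n where "n \<in> A" "n \<le> N"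
      by (meson atLeastAtMost_iff ex_in_conv subsetD)
    then show "?X \<noteq> {}"
      using A by blast
  next
    fix x assume "x \<in> ?X"
    then obtain n A where "x = dist (Sstar m) (S n)" "is_knn S N t (Sstar m) A" "n \<in> A"
      by blast
    then show "x \<le> r"
      using is_knn_dist_le[of S N t "Sstar m" A r n] assms(3) m by simp
  qed
  then show ?thesis
    unfolding Rdist_def using assms(1) by (intro Max.boundedI) auto
qed

lemma infill_eventually_count_within:
  assumes "infill S Sstar M" "0 < r"
  shows "eventually (\<lambda>N. \<forall>m\<in>{1..M}. j \<le> count_within S N (Sstar m) r) sequentially"
proof (rule eventually_ball_finite[OF finite_atLeastAtMost], rule ballI)
  fix m assume "m \<in> {1..M}"
  moreover have "open (ball (Sstar m) r)" "Sstar m \<in> ball (Sstar m) r"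
    using assms(2) by auto
  ultimately have "infinite {n. 1 \<le> n \<and> S n \<in> ball (Sstar m) r}"
    using assms(1) unfolding infill_def by blast
  then show "eventually (\<lambda>N. j \<le> count_within S N (Sstar m) r) sequentially"
  proof (rule infinite_imp_eventually_card_ge[THEN eventually_mono])
    fix N
    have sub: "{n. 1 \<le> n \<and> S n \<in> ball (Sstar m) r} \<inter> {..N} \<subseteq> {n\<in>{1..N}. dist (Sstar m) (S n) \<le> r}"
      by auto
    assume "j \<le> card ({n. 1 \<le> n \<and> S n \<in> ball (Sstar m) r} \<inter> {..N})"
    also have "\<dots> \<le> count_within S N (Sstar m) r"
      unfolding count_within_def by (rule card_mono[OF _ sub]) simp
    finally show "j \<le> count_within S N (Sstar m) r" .
  qed
qed

lemma adaptive_k_Suc: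
  assumes "adaptive_k S Sstar M a k" "1 \<le> N"
  shows "k (Suc N) = (if Rdist S Sstar M (Suc N) (Suc (k N)) \<le> a (k N) then Suc (k N) else k N)"
  using assms unfolding adaptive_k_def by simp

lemma adaptive_k_bounds:
  assumes "adaptive_k S Sstar M a k" "1 \<le> N"
  shows "1 \<le> k N \<and> k N \<le> N"
  using assms(2)
proof (induction N rule: dec_induct)
  case base
  then show ?case
    using assms(1) unfolding adaptive_k_def by simp
next
  case (step N)
  then show ?case
    using adaptive_k_Suc[OF assms(1) step(1)] by simp
qed

lemma adaptive_k_mono:
  assumes "adaptive_k S Sstar M a k" "1 \<le> N" "N \<le> N'"
  shows "k N \<le> k N'"
  using assms(3)
proof (induction N' rule: dec_induct)
  case (step N')
  then show ?case
    using adaptive_k_Suc[OF assms(1), of N'] assms(2) by simp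
qed simp

lemma adaptive_k_count_within:
  assumes "adaptive_k S Sstar M a k" "1 \<le> N" "2 \<le> k N" "m \<in> {1..M}"
  shows "k N \<le> count_within S N (Sstar m) (a (k N - 1))"
  using assms(2,3)
proof (induction N rule: dec_induct)
  case base
  then show ?case
    using assms(1) unfolding adaptive_k_def by simp
next
  case (step N)
  show ?case
  proof (cases "Rdist S Sstar M (Suc N) (Suc (k N)) \<le> a (k N)")
    case True
    have "Suc (k N) \<le> count_within S (Suc N) (Sstar m) (Rdist S Sstar M (Suc N) (Suc (k N)))"
      using count_within_Rdist[of m M "Suc (k N)" "Suc N" S Sstar] assms(4)
        adaptive_k_bounds[OF assms(1) step(1)] by simp
    also have "\<dots> \<le> count_within S (Suc N) (Sstar m) (a (k N))"
      using True by (rule count_within_mono[OF order_refl])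
    finally show ?thesis
      using True adaptive_k_Suc[OF assms(1) step(1)] by simp
  next
    case False
    then have "k (Suc N) = k N"
      using adaptive_k_Suc[OF assms(1) step(1)] by simp
    then show ?thesis
      using step count_within_mono[of N "Suc N" "a (k N - 1)" "a (k N - 1)" S "Sstar m"]
      by simp
  qed
qed

lemma adaptive_k_increases:
  assumes "adaptive_k S Sstar M a k" "infill S Sstar M" "\<forall>t\<ge>1. 0 < a t" "1 \<le> M" "1 \<le> N"
  shows "\<exists>N'>N. k N < k N'"
proof (rule ccontr)
  assume "\<not> ?thesis"
  then have const: "k N' = k N" if "N \<le> N'" for N'
    using adaptive_k_mono[OF assms(1,5) that] that by (metis le_antisym le_neq_implies_less not_less)
  define K where "K = k N"
  have "0 < a K"
    using assms(3) adaptive_k_bounds[OF assms(1,5)] unfolding K_def by simp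
  then obtain N1 where N1: "\<forall>N'\<ge>N1. \<forall>m\<in>{1..M}. Suc K \<le> count_within S N' (Sstar m) (a K / 2)"
    using infill_eventually_count_within[OF assms(2), of "a K / 2"]
    unfolding eventually_sequentially by auto
  define N' where "N' = max N N1"
  have "Rdist S Sstar M (Suc N') (Suc K) \<le> a K / 2"
    using N1 assms(4) unfolding N'_def by (intro Rdist_le) auto
  then have "k (Suc N') = Suc K"
    using adaptive_k_Suc[OF assms(1), of N'] const[of N'] \<open>0 < a K\<close> assms(5)
    unfolding N'_def K_def by simp
  then show False
    using const[of "Suc N'"] unfolding N'_def K_def by simp
qed

lemma adaptive_k_tendsto_at_top:
  assumes "adaptive_k S Sstar M a k" "infill S Sstar M" "\<forall>t\<ge>1. 0 < a t" "1 \<le> M"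
  shows "filterlim k at_top sequentially"
proof -
  have "\<exists>N\<ge>1. j \<le> k N" for j
  proof (induction j)
    case 0
    then show ?case by blast
  next
    case (Suc j)
    then obtain N where "1 \<le> N" "j \<le> k N"
      by blast
    then show ?case
      using adaptive_k_increases[OF assms] by (meson Suc_leI le_less_trans less_imp_le_nat)
  qed
  then show ?thesis
    unfolding filterlim_at_top eventually_sequentially
    by (meson adaptive_k_mono[OF assms(1)] order_trans)
qed

lemma adaptive_k_eventually_neighbours_close:
  assumes "adaptive_k S Sstar M a k" "infill S Sstar M" "\<forall>t\<ge>1. 0 < a t" "a \<longlonglongrightarrow> 0" "0 < r"
  shows "eventually (\<lambda>N. \<forall>m\<in>{1..M}. \<forall>A. is_knn S N (k N) (Sstar m) A \<longrightarrow>
           (\<forall>n\<in>A. dist (Sstar m) (S n) < r)) sequentially"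
proof (cases "M = 0")
  case False
  obtain T where T: "\<forall>t\<ge>T. a t < r"
    using order_tendstoD(2)[OF assms(4,5)] unfolding eventually_sequentially by blast
  have "eventually (\<lambda>N. T + 2 \<le> k N \<and> 1 \<le> N) sequentially"
    using adaptive_k_tendsto_at_top[OF assms(1-3)] False
    by (auto simp: filterlim_at_top intro: eventually_conj eventually_ge_at_top)
  then show ?thesis
  proof (rule eventually_mono, intro ballI allI impI)
    fix N m A n
    assume N: "T + 2 \<le> k N \<and> 1 \<le> N" and m: "m \<in> {1..M}"
      and A: "is_knn S N (k N) (Sstar m) A" and "n \<in> A"
    have "1 \<le> N" "2 \<le> k N"
      using N by auto
    then have "dist (Sstar m) (S n) \<le> a (k N - 1)"
      using is_knn_dist_le[OF A adaptive_k_count_within[OF assms(1) _ _ m]] \<open>n \<in> A\<close> by blast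
    also have "\<dots> < r"
      using N T by (simp add: le_diff_conv2)
    finally show "dist (Sstar m) (S n) < r" .
  qed
qed simp

theorem lemmaE1:
  fixes S Sstar :: "nat \<Rightarrow> 'a::metric_space" and M :: nat
    and a :: "nat \<Rightarrow> real" and k :: "nat \<Rightarrow> nat"
  assumes "inj_on Sstar {1..M}"
    and "infill S Sstar M"
    and "\<forall>t\<ge>1. a t > 0"
    and "a \<longlonglongrightarrow> 0"
    and "adaptive_k S Sstar M a k"
  shows "\<exists>N0. \<forall>N\<ge>N0. \<forall>sel :: nat \<Rightarrow> nat set.
           (\<forall>m\<in>{1..M}. is_knn S N (k N) (Sstar m) (sel m)) \<longrightarrow>
           (\<forall>m\<in>{1..M}. \<forall>m'\<in>{1..M}. m \<noteq> m' \<longrightarrow>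
              (\<forall>n\<in>{1..N}. Psi_entry (k N) (sel m) n * Psi_entry (k N) (sel m') n = 0))"
proof -
  obtain \<delta> where \<delta>: "0 < \<delta>" "\<forall>m\<in>{1..M}. \<forall>m'\<in>{1..M}. m \<noteq> m' \<longrightarrow> \<delta> \<le> dist (Sstar m) (Sstar m')"
    using finite_inj_on_separated[OF finite_atLeastAtMost assms(1)] by blast
  then obtain N0 where N0: "\<forall>N\<ge>N0. \<forall>m\<in>{1..M}. \<forall>A. is_knn S N (k N) (Sstar m) A \<longrightarrow>
      (\<forall>n\<in>A. dist (Sstar m) (S n) < \<delta> / 2)"
    using adaptive_k_eventually_neighbours_close[OF assms(5,2,3,4), of "\<delta> / 2"]
    unfolding eventually_sequentially by auto
  show ?thesis
  proof (intro exI[of _ N0] allI impI ballI)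
    fix N sel m m' n
    assume "N0 \<le> N" and sel: "\<forall>m\<in>{1..M}. is_knn S N (k N) (Sstar m) (sel m)"
      and m: "m \<in> {1..M}" "m' \<in> {1..M}" "m \<noteq> m'"
    have close: "dist (Sstar i) (S n) < \<delta> / 2" if "i \<in> {1..M}" "n \<in> sel i" for i
      using N0 \<open>N0 \<le> N\<close> sel that by blast
    have "n \<notin> sel m \<or> n \<notin> sel m'"
    proof (rule ccontr)
      assume "\<not> ?thesis"
      then have "dist (Sstar m) (Sstar m') < \<delta>"
        using close[of m] close[of m'] m dist_triangle2[of "Sstar m" "Sstar m'" "S n"] by auto
      then show False
        using \<delta>(2) m by force
    qed
    then show "Psi_entry (k N) (sel m) n * Psi_entry (k N) (sel m') n = 0"
      unfolding Psi_entry_def by auto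
  qed
qed

end
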